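(* For all $z\in\mathbb{C}\setminus\big((-\infty,-1]\cup[1,\infty)\big)$, $$z(1+z)\gamma(z)+z(1-z)\gamma(-z)=2z^3\gamma(z^2)-2z\log 2+(1+z)\log(1+z)-(1-z)\log(1-z).$$
   Context: $\gamma(z)$ is the generalized-Euler-constant function: for $|z|\le1$, $\gamma(z)=\sum_{n=1}^{\infty} z^{n-1}\left(\frac{1}{n}-\log\frac{n+1}{n}\right)$, and for $z\in\mathbb{C}\setminus[1,\infty)$ it denotes the analytic continuation $\gamma(z)=\int_0^1\frac{1-x+\log x}{(1-xz)\log x}\,dx$. $\log$ is the principal branch. *)

theory Defs
  imports "HOL-Analysis.Analysis"
begin

text \<open>Generalized Euler constant function, defined for z in C minus [1,inf) by
  gamma(z) = integral over [0,1] of (1 - x + log x) / ((1 - x z) log x) dx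
  (analytic continuation of sum z^(n-1) (1/n - log((n+1)/n)) from the unit disc).\<close>
definition gen_euler_gamma :: "complex \<Rightarrow> complex" where
  "gen_euler_gamma z =
     integral {0..1::real}
       (\<lambda>x. complex_of_real (1 - x + ln x) / ((1 - complex_of_real x * z) * complex_of_real (ln x)))"

end

theory Submission
  imports Defs "HOL-Real_Asymp.Real_Asymp"
begin

(* Since (1 - x + ln x) / ln x = 1 - L(x), where L(x) = (x - 1) / ln x is the logarithmic mean
   of x and 1, gamma(w) is the integral over [0,1] of (1 - L(x)) / (1 - x w).  Substituting x = y^2
   in gamma(z^2) and using L(y^2) = (1 + y) L(y) / 2, the combination
   z (1 + z) gamma(z) + z (1 - z) gamma(-z) - 2 z^3 gamma(z^2) becomes the integral of
   z (1 - z) / (1 - x z) + z (1 + z) / (1 + x z) - 2 z L(x): the partial fractions integrate to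
   logarithms, and the integral of L over [0,1] is ln 2. *)

definition log_mean :: "real \<Rightarrow> real" where
  "log_mean x = (if x = 0 then 0 else if x = 1 then 1 else (x - 1) / ln x)"

lemma log_mean_square:
  assumes "0 \<le> x"
  shows "log_mean (x\<^sup>2) = (1 + x) * log_mean x / 2"
proof -
  consider "x = 0" | "x = 1" | "0 < x" "x \<noteq> 1" using assms by fastforce
  then show ?thesis
  proof cases
    case 3
    then have "x\<^sup>2 \<noteq> 1" "ln x \<noteq> 0" by (auto simp: power2_eq_1_iff)
    moreover have "ln (x\<^sup>2) = 2 * ln x" using 3 by (simp add: ln_realpow)
    ultimately show ?thesis using 3 by (simp add: log_mean_def field_simps power2_eq_square)
  qed (auto simp: log_mean_def)
qed

lemma continuous_on_log_mean: "continuous_on {0..1} log_mean"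
proof -
  have "continuous (at x within {0..1}) log_mean" if "x \<in> {0..1}" for x
  proof -
    consider "x = 0" | "x = 1" | "0 < x" "x < 1" using \<open>x \<in> {0..1}\<close> by fastforce
    then show ?thesis
    proof cases
      case 1
      have ev: "eventually (\<lambda>y. (y - 1) / ln y = log_mean y) (at_right (0::real))"
        using eventually_at_right_real[of 0 "1::real"] by (auto elim!: eventually_mono simp: log_mean_def)
      have "((\<lambda>y. (y - 1) / ln y) \<longlongrightarrow> 0) (at_right (0::real))" by real_asymp
      then have "(log_mean \<longlongrightarrow> 0) (at_right 0)" using tendsto_cong[OF ev] by simp
      moreover have "log_mean 0 = 0" by (simp add: log_mean_def)
      ultimately have "(log_mean \<longlongrightarrow> log_mean 0) (at_right 0)" by simp
      then show ?thesis using 1 by (simp add: continuous_within at_within_Icc_at_right)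
    next
      case 2
      have ev: "eventually (\<lambda>y. (y - 1) / ln y = log_mean y) (at_left (1::real))"
        using eventually_at_left_real[of 0 "1::real"] by (auto elim!: eventually_mono simp: log_mean_def)
      have "((\<lambda>y. (y - 1) / ln y) \<longlongrightarrow> 1) (at_left (1::real))" by real_asymp
      then have "(log_mean \<longlongrightarrow> 1) (at_left 1)" using tendsto_cong[OF ev] by simp
      moreover have "log_mean 1 = 1" by (simp add: log_mean_def)
      ultimately have "(log_mean \<longlongrightarrow> log_mean 1) (at_left 1)" by simp
      then show ?thesis using 2 by (simp add: continuous_within at_within_Icc_at_left)
    next
      case 3
      have ev: "eventually (\<lambda>y. (y - 1) / ln y = log_mean y) (nhds x)"
        using eventually_nhds_in_open[of "{0<..<1}" x] 3 by (auto elim!: eventually_mono simp: log_mean_def)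
      have "isCont (\<lambda>y. (y - 1) / ln y) x" using 3 by (auto intro!: continuous_intros)
      then have "isCont log_mean x" using isCont_cong[OF ev] by simp
      then show ?thesis by (rule continuous_at_imp_continuous_at_within)
    qed
  qed
  then show ?thesis by (simp add: continuous_on_eq_continuous_within)
qed

lemma has_integral_substitution_square:
  fixes f :: "real \<Rightarrow> 'a::euclidean_space"
  assumes "continuous_on {0..1} f"
  shows "((\<lambda>x. (2 * x) *\<^sub>R f (x\<^sup>2)) has_integral integral {0..1} f) {0..1}"
proof -
  have "((\<lambda>x. (2 * x) *\<^sub>R f (x\<^sup>2)) has_integral integral {0\<^sup>2..1\<^sup>2} f) {0..1}"
    by (rule has_integral_substitution[where c = 0 and d = 1])
       (auto intro!: derivative_eq_intros assms simp: power_le_one)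
  then show ?thesis by simp
qed

lemma has_integral_powr_in_exponent:
  assumes "0 \<le> x"
  shows "((\<lambda>s. x powr s) has_integral x * (1 + x) * log_mean x) {1..3}"
proof -
  consider "x = 0" | "x = 1" | "0 < x" "x \<noteq> 1" using assms by fastforce
  then show ?thesis
  proof cases
    case 3
    have "((\<lambda>s. exp (s * ln x)) has_integral (exp (3 * ln x) / ln x - exp (1 * ln x) / ln x)) {1..3}"
    proof (rule fundamental_theorem_of_calculus)
      fix s :: real
      have "((\<lambda>s. exp (s * ln x) / ln x) has_real_derivative exp (s * ln x)) (at s within {1..3})"
        using 3 by (auto intro!: derivative_eq_intros)
      then show "((\<lambda>s. exp (s * ln x) / ln x) has_vector_derivative exp (s * ln x)) (at s within {1..3})"
        by (simp add: has_real_derivative_iff_has_vector_derivative)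
    qed simp
    moreover have "exp (3 * ln x) / ln x - exp (1 * ln x) / ln x = x * (1 + x) * log_mean x"
      using 3 exp_of_nat_mult[of 3 "ln x"] by (simp add: log_mean_def field_simps power3_eq_cube)
    ultimately show ?thesis using 3 by (simp add: powr_def)
  qed (use has_integral_const_real[of "1::real" 1 3] in \<open>auto simp: log_mean_def\<close>)
qed

lemma has_integral_log_mean: "(log_mean has_integral ln 2) {0..1}"
proof -
  have powr: "((\<lambda>x. x powr s) has_integral 1 / (s + 1)) {0..1}" if "s \<in> {1..3}" for s :: real
    using has_integral_powr_from_0[of s 1] that by simp
  have log: "((\<lambda>s. 1 / (s + 1)) has_integral ln 2) {1..3::real}"
  proof -
    have "((\<lambda>s. 1 / (s + 1)) has_integral ln (3 + 1) - ln (1 + 1)) {1..3::real}"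
    proof (rule fundamental_theorem_of_calculus)
      fix s :: real
      assume "s \<in> {1..3}"
      then have "((\<lambda>s. ln (s + 1)) has_real_derivative 1 / (s + 1)) (at s within {1..3})"
        by (auto intro!: derivative_eq_intros)
      then show "((\<lambda>s. ln (s + 1)) has_vector_derivative 1 / (s + 1)) (at s within {1..3})"
        by (simp add: has_real_derivative_iff_has_vector_derivative)
    qed simp
    moreover have "ln (4::real) = 2 * ln 2" using ln_realpow[of 2 2] by simp
    ultimately show ?thesis by simp
  qed
  have "continuous_on (cbox (0, 1) (1, 3)) (\<lambda>p. fst p powr snd p :: real)"
    by (rule continuous_on_powr') (auto intro!: continuous_intros simp: cbox_Pair_iff)
  then have cont: "continuous_on (cbox (0, 1) (1, 3)) (\<lambda>(x, s). x powr s :: real)"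
    by (simp add: case_prod_beta')
  \<comment> \<open>The detour through x = y^2 makes the exponent range [1,3], where y powr s is jointly
    continuous, so that Fubini applies; on [0,1] it would fail at (0, 0).\<close>
  have "integral {0..1} (\<lambda>x. 2 * x * log_mean (x\<^sup>2)) = integral {0..1} (\<lambda>x. integral {1..3} (\<lambda>s. x powr s))"
    by (intro integral_cong) (auto simp: log_mean_square integral_unique[OF has_integral_powr_in_exponent])
  also have "\<dots> = integral {1..3} (\<lambda>s. integral {0..1} (\<lambda>x. x powr s))"
    using integral_swap_continuous[OF cont] by simp
  also have "\<dots> = integral {1..3} (\<lambda>s. 1 / (s + 1))"
    by (rule integral_cong) (rule integral_unique[OF powr])
  also have "\<dots> = ln 2"
    by (rule integral_unique[OF log])
  finally have "integral {0..1} log_mean = ln 2"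
    using integral_unique[OF has_integral_substitution_square[OF continuous_on_log_mean]] by simp
  then show ?thesis
    using integrable_continuous_real[OF continuous_on_log_mean] by (simp add: has_integral_iff)
qed

(* Agrees with the integrand of gen_euler_gamma except at x = 0, where ln 0 = 0 makes the latter vanish. *)
definition gen_euler_gamma_integrand :: "complex \<Rightarrow> real \<Rightarrow> complex" where
  "gen_euler_gamma_integrand w x = (1 - of_real (log_mean x)) / (1 - of_real x * w)"

lemma image_of_real_atLeast: "complex_of_real ` {a..} = {w. Im w = 0 \<and> Re w \<ge> a}"
proof (intro set_eqI iffI)
  fix w :: complex
  assume "w \<in> {w. Im w = 0 \<and> Re w \<ge> a}"
  then have "Re w \<in> {a..}" "w = of_real (Re w)" by (auto simp: complex_eq_iff)
  then show "w \<in> complex_of_real ` {a..}" by (rule rev_image_eqI)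
qed auto

lemma one_minus_mult_notin_nonpos_Reals:
  assumes "w \<notin> complex_of_real ` {1..}" "x \<in> {0..1}"
  shows "1 - complex_of_real x * w \<notin> \<real>\<^sub>\<le>\<^sub>0"
proof
  assume "1 - complex_of_real x * w \<in> \<real>\<^sub>\<le>\<^sub>0"
  then obtain r where r: "1 - complex_of_real x * w = of_real r" "r \<le> 0"
    by (rule nonpos_Reals_cases)
  have "x \<noteq> 0" using r by auto
  then have "(1 - r) / x \<in> {1..}" using r(2) assms(2) by (simp add: field_simps)
  moreover have "w = of_real ((1 - r) / x)" using r(1) \<open>x \<noteq> 0\<close> by (simp add: field_simps)
  ultimately have "w \<in> complex_of_real ` {1..}" by (rule rev_image_eqI)
  with assms(1) show False by contradiction
qed

lemma continuous_on_gen_euler_gamma_integrand: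
  assumes "w \<notin> complex_of_real ` {1..}"
  shows "continuous_on {0..1} (gen_euler_gamma_integrand w)"
  unfolding gen_euler_gamma_integrand_def
  using one_minus_mult_notin_nonpos_Reals[OF assms]
  by (fastforce intro!: continuous_intros continuous_on_log_mean)

lemma has_integral_gen_euler_gamma:
  assumes "w \<notin> complex_of_real ` {1..}"
  shows "(gen_euler_gamma_integrand w has_integral gen_euler_gamma w) {0..1}"
proof -
  have "integral {0..1} (gen_euler_gamma_integrand w) = gen_euler_gamma w"
    unfolding gen_euler_gamma_def
  proof (rule integral_spike[where S = "{0}"])
    fix x :: real
    assume "x \<in> {0..1} - {0}"
    then consider "x = 1" | "0 < x" "x < 1" by fastforce
    then show "complex_of_real (1 - x + ln x) / ((1 - complex_of_real x * w) * complex_of_real (ln x))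
        = gen_euler_gamma_integrand w x"
    proof cases
      case 2
      then have "ln x \<noteq> 0" by simp
      then have "1 - complex_of_real (log_mean x) = of_real (1 - x + ln x) / of_real (ln x)"
        using 2 by (simp add: log_mean_def field_simps)
      then show ?thesis by (simp add: gen_euler_gamma_integrand_def)
    qed (simp add: gen_euler_gamma_integrand_def log_mean_def)
  qed simp
  then show ?thesis
    using integrable_continuous_real[OF continuous_on_gen_euler_gamma_integrand[OF assms]]
    by (simp add: has_integral_iff)
qed

lemma has_integral_Ln_one_minus:
  assumes "w \<notin> complex_of_real ` {1..}"
  shows "((\<lambda>x. w / (1 - complex_of_real x * w)) has_integral - Ln (1 - w)) {0..1}"
proof -
  have "((\<lambda>x. w / (1 - complex_of_real x * w)) has_integral
          - Ln (1 - complex_of_real 1 * w) - - Ln (1 - complex_of_real 0 * w)) {0..1}"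
  proof (rule fundamental_theorem_of_calculus)
    fix x :: real
    assume x: "x \<in> {0..1}"
    have "((\<lambda>u. - Ln (1 - u * w)) has_field_derivative w / (1 - complex_of_real x * w)) (at (of_real x))"
      using one_minus_mult_notin_nonpos_Reals[OF assms x]
      by (auto intro!: derivative_eq_intros simp: field_simps)
    then show "((\<lambda>x. - Ln (1 - complex_of_real x * w)) has_vector_derivative w / (1 - complex_of_real x * w))
        (at x within {0..1})"
      by (rule has_vector_derivative_real_field)
  qed simp
  then show ?thesis by simp
qed

lemma gen_euler_gamma_integrand_combination:
  fixes z :: complex
  assumes "x \<ge> 0" "1 - complex_of_real x * z \<noteq> 0" "1 + complex_of_real x * z \<noteq> 0"
  shows "z * (1 + z) * gen_euler_gamma_integrand z x + z * (1 - z) * gen_euler_gamma_integrand (-z) x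
           - 2 * z ^ 3 * ((2 * x) *\<^sub>R gen_euler_gamma_integrand (z\<^sup>2) (x\<^sup>2))
         = (1 - z) * (z / (1 - complex_of_real x * z)) - (1 + z) * (- z / (1 - complex_of_real x * - z))
           - 2 * z * of_real (log_mean x)"
proof -
  define X L where "X = complex_of_real x" and "L = complex_of_real (log_mean x)"
  define u v where "u = inverse (1 - X * z)" and "v = inverse (1 + X * z)"
  have u: "u * (1 - X * z) = 1" and v: "v * (1 + X * z) = 1"
    using assms by (simp_all add: u_def v_def X_def)
  have uv: "inverse (1 - X\<^sup>2 * z\<^sup>2) = u * v"
    by (simp add: u_def v_def power2_eq_square algebra_simps flip: inverse_mult_distrib)
  have "2 * complex_of_real (log_mean (x\<^sup>2)) = (1 + X) * L"
    using assms(1) by (simp add: log_mean_square X_def L_def)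
  then show ?thesis
    unfolding gen_euler_gamma_integrand_def scaleR_conv_of_real of_real_mult of_real_numeral of_real_power
      X_def[symmetric] L_def[symmetric] divide_inverse mult_minus_right diff_minus_eq_add
      u_def[symmetric] v_def[symmetric] uv
    using u v by algebra
qed

lemma power2_in_of_real_atLeast_1:
  fixes z :: complex
  assumes "z\<^sup>2 \<in> complex_of_real ` {1..}"
  shows "z \<in> complex_of_real ` {1..} \<or> - z \<in> complex_of_real ` {1..}"
proof -
  obtain t where t: "z\<^sup>2 = of_real t" "t \<ge> 1" using assms by auto
  then have "Re z * Im z = 0" "(Re z)\<^sup>2 - (Im z)\<^sup>2 = t"
    by (auto simp: complex_eq_iff power2_eq_square)
  moreover have "Re z \<noteq> 0"
  proof
    assume "Re z = 0"
    then have "- (Im z)\<^sup>2 \<ge> 1" using \<open>(Re z)\<^sup>2 - (Im z)\<^sup>2 = t\<close> t(2) by simp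
    then show False using zero_le_power2[of "Im z"] by linarith
  qed
  ultimately have "Im z = 0" "(Re z)\<^sup>2 \<ge> 1" using t(2) by auto
  then have "z = of_real (Re z)" "1 \<le> \<bar>Re z\<bar>"
    by (auto simp: complex_eq_iff) (meson abs_square_less_1 not_le)
  then show ?thesis
  proof (cases "Re z \<ge> 0")
    case True
    then show ?thesis using \<open>z = of_real (Re z)\<close> \<open>1 \<le> \<bar>Re z\<bar>\<close>
      by (intro disjI1 image_eqI[where x = "Re z"]) auto
  next
    case False
    then show ?thesis using \<open>z = of_real (Re z)\<close> \<open>1 \<le> \<bar>Re z\<bar>\<close>
      by (intro disjI2 image_eqI[where x = "- Re z"]) (auto simp: complex_eq_iff)
  qed
qed

lemma has_integral_gen_euler_gamma_square:
  assumes "w \<notin> complex_of_real ` {1..}"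
  shows "((\<lambda>x. (2 * x) *\<^sub>R gen_euler_gamma_integrand w (x\<^sup>2)) has_integral gen_euler_gamma w) {0..1}"
  using has_integral_substitution_square[OF continuous_on_gen_euler_gamma_integrand[OF assms]]
  by (simp add: integral_unique[OF has_integral_gen_euler_gamma[OF assms]])

lemma has_integral_gen_euler_gamma_combination:
  assumes z: "z \<notin> complex_of_real ` {1..}" and minus_z: "- z \<notin> complex_of_real ` {1..}"
  shows "((\<lambda>x. (1 - z) * (z / (1 - complex_of_real x * z)) - (1 + z) * (- z / (1 - complex_of_real x * - z))
                - 2 * z * of_real (log_mean x))
          has_integral z * (1 + z) * gen_euler_gamma z + z * (1 - z) * gen_euler_gamma (-z)
                       - 2 * z ^ 3 * gen_euler_gamma (z\<^sup>2)) {0..1}"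
proof (rule has_integral_eq)
  have "z\<^sup>2 \<notin> complex_of_real ` {1..}"
    using power2_in_of_real_atLeast_1 z minus_z by blast
  then show "((\<lambda>x. z * (1 + z) * gen_euler_gamma_integrand z x + z * (1 - z) * gen_euler_gamma_integrand (-z) x
                - 2 * z ^ 3 * ((2 * x) *\<^sub>R gen_euler_gamma_integrand (z\<^sup>2) (x\<^sup>2)))
          has_integral z * (1 + z) * gen_euler_gamma z + z * (1 - z) * gen_euler_gamma (-z)
                       - 2 * z ^ 3 * gen_euler_gamma (z\<^sup>2)) {0..1}"
    by (intro has_integral_diff has_integral_add has_integral_mult_right
          has_integral_gen_euler_gamma has_integral_gen_euler_gamma_square z minus_z)
next
  fix x :: real
  assume "x \<in> {0..1}"
  then show "z * (1 + z) * gen_euler_gamma_integrand z x + z * (1 - z) * gen_euler_gamma_integrand (-z) x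
               - 2 * z ^ 3 * ((2 * x) *\<^sub>R gen_euler_gamma_integrand (z\<^sup>2) (x\<^sup>2))
             = (1 - z) * (z / (1 - complex_of_real x * z)) - (1 + z) * (- z / (1 - complex_of_real x * - z))
               - 2 * z * of_real (log_mean x)"
    using one_minus_mult_notin_nonpos_Reals[OF z] one_minus_mult_notin_nonpos_Reals[OF minus_z]
    by (intro gen_euler_gamma_integrand_combination) fastforce+
qed

theorem theorem15:
  fixes z :: complex
  assumes "z \<notin> {w. Im w = 0 \<and> (Re w \<le> -1 \<or> Re w \<ge> 1)}"
  shows "z * (1 + z) * gen_euler_gamma z + z * (1 - z) * gen_euler_gamma (-z)
         = 2 * z ^ 3 * gen_euler_gamma (z ^ 2) - 2 * z * complex_of_real (ln 2)
           + (1 + z) * Ln (1 + z) - (1 - z) * Ln (1 - z)"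
proof -
  have z: "z \<notin> complex_of_real ` {1..}" and minus_z: "- z \<notin> complex_of_real ` {1..}"
    using assms by (auto simp: image_of_real_atLeast)
  have "((\<lambda>x. (1 - z) * (z / (1 - complex_of_real x * z)) - (1 + z) * (- z / (1 - complex_of_real x * - z))
                - 2 * z * of_real (log_mean x))
          has_integral (1 - z) * - Ln (1 - z) - (1 + z) * - Ln (1 - - z) - 2 * z * of_real (ln 2)) {0..1}"
    by (intro has_integral_diff has_integral_mult_right has_integral_Ln_one_minus z minus_z
          has_integral_of_real has_integral_log_mean)
  then have "z * (1 + z) * gen_euler_gamma z + z * (1 - z) * gen_euler_gamma (-z) - 2 * z ^ 3 * gen_euler_gamma (z\<^sup>2)
      = (1 - z) * - Ln (1 - z) - (1 + z) * - Ln (1 - - z) - 2 * z * of_real (ln 2)"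
    using has_integral_gen_euler_gamma_combination[OF z minus_z] has_integral_unique by blast
  then show ?thesis
    by (simp add: algebra_simps)
qed

end
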